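(* Let $L\subseteq\Sigma^*$ be a regular language. Then $N^1(L)=O(1)$ if and only if $L\in\mathcal{C}om(\Sigma)$ (i.e. its syntactic monoid is commutative); otherwise $N^1(L)=\Omega(\log n)$.
   Context: Non-deterministic communication complexity: for $f:X\times Y\to\{0,1\}$, $N^1(f)$ is the minimum cost of a non-deterministic protocol for $f$; equivalently, up to an additive constant 2, $N^1(f)=\log_2 C^1(f)$, where $C^1(f)$ is the minimum number of rectangles $S\times T\subseteq X\times Y$ on which $f\equiv1$ whose union is $f^{-1}(1)$. For a language $L\subseteq\Sigma^*$, $N^1(L)(n)$ is $N^1$ of the function in which Alice receives $a_1,a_3,\dots,a_{2n-1}$, Bob receives $a_2,a_4,\dots,a_{2n}$, each $a_i\in\Sigma\cup\{\epsilon\}$ ($\epsilon$ the empty word), and the value is $1$ iff $a_1a_2\cdots a_{2n}\in L$. The syntactic monoid of $L$ is $\Sigma^*/\equiv_L$ where $x\equiv_L y$ iff for all $u,v\in\Sigma^*$, $uxv\in L\Leftrightarrow uyv\in L$. $\mathcal{C}om(\Sigma)$ denotes the set of regular languages over $\Sigma$ whose syntactic monoid is commutative. Asymptotics are as $n\to\infty$. *)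

theory Defs
  imports Complex_Main "HOL-Library.Landau_Symbols"
begin

definition regular :: "'a list set \<Rightarrow> bool" where
  "regular L \<longleftrightarrow> (\<exists>(Q::nat set) (\<delta>::nat \<Rightarrow> 'a \<Rightarrow> nat) q0 F.
      finite Q \<and> q0 \<in> Q \<and> (\<forall>q\<in>Q. \<forall>a. \<delta> q a \<in> Q) \<and> F \<subseteq> Q \<and>
      L = {w. foldl \<delta> q0 w \<in> F})"

definition synt_equiv :: "'a list set \<Rightarrow> 'a list \<Rightarrow> 'a list \<Rightarrow> bool" where
  "synt_equiv L x y \<longleftrightarrow> (\<forall>u v. u @ x @ v \<in> L \<longleftrightarrow> u @ y @ v \<in> L)"

definition synt_monoid_commutative :: "'a list set \<Rightarrow> bool" where
  "synt_monoid_commutative L \<longleftrightarrow> (\<forall>x y. synt_equiv L (x @ y) (y @ x))"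

definition one_cover :: "('x \<Rightarrow> 'y \<Rightarrow> bool) \<Rightarrow> 'x set \<Rightarrow> 'y set \<Rightarrow> ('x set \<times> 'y set) set \<Rightarrow> bool" where
  "one_cover f X Y R \<longleftrightarrow> finite R \<and>
     (\<forall>(S,T)\<in>R. S \<subseteq> X \<and> T \<subseteq> Y \<and> (\<forall>x\<in>S. \<forall>y\<in>T. f x y)) \<and>
     (\<Union>(S,T)\<in>R. S \<times> T) = {(x,y). x \<in> X \<and> y \<in> Y \<and> f x y}"

definition C1 :: "('x \<Rightarrow> 'y \<Rightarrow> bool) \<Rightarrow> 'x set \<Rightarrow> 'y set \<Rightarrow> nat" where
  "C1 f X Y = (LEAST k. \<exists>R. one_cover f X Y R \<and> card R = k)"

text \<open>N^1 = log2 C^1 (up to an additive constant; max 1 avoids log 0 when f is constantly 0).\<close>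
definition N1 :: "('x \<Rightarrow> 'y \<Rightarrow> bool) \<Rightarrow> 'x set \<Rightarrow> 'y set \<Rightarrow> real" where
  "N1 f X Y = log 2 (real (max 1 (C1 f X Y)))"

definition opt_word :: "'a option \<Rightarrow> 'a list" where
  "opt_word a = (case a of None \<Rightarrow> [] | Some b \<Rightarrow> [b])"

text \<open>Alice holds a1,a3,...,a_{2n-1}, Bob holds a2,...,a_{2n}; None encodes the empty word.\<close>
definition interleave :: "'a option list \<Rightarrow> 'a option list \<Rightarrow> 'a list" where
  "interleave xs ys = concat (map (\<lambda>(a,b). opt_word a @ opt_word b) (zip xs ys))"

definition inputs :: "nat \<Rightarrow> 'a option list set" where
  "inputs n = {xs. length xs = n}"

definition N1_lang :: "'a list set \<Rightarrow> nat \<Rightarrow> real" where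
  "N1_lang L n = N1 (\<lambda>xs ys. interleave xs ys \<in> L) (inputs n) (inputs n)"

end

theory Submission
  imports Defs "HOL-Real_Asymp.Real_Asymp"
begin

text \<open>If the syntactic monoid is commutative, the interleaved word is syntactically equivalent
  to Alice's letters followed by Bob's, so membership is decided by the automaton state
  reached on Alice's part and the set of states from which Bob's part is accepted: a number
  of 1-rectangles independent of n suffices. Otherwise some u x y v \<in> L has u y x v \<notin> L;
  placing x and y into one of linearly many disjoint slots on the two sides yields a fooling
  set of size linear in n, so at least log n rectangles are needed.\<close>

lemma one_cover_exists:
  assumes "finite X" "finite Y"
  shows "\<exists>R. one_cover f X Y R"
proof -
  let ?P = "{(x, y). x \<in> X \<and> y \<in> Y \<and> f x y}"
  have "finite ?P"
    using assms by (auto intro: finite_subset[of _ "X \<times> Y"])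
  then have "one_cover f X Y ((\<lambda>(x, y). ({x}, {y})) ` ?P)"
    unfolding one_cover_def by auto
  then show ?thesis ..
qed

lemma C1_le_card:
  assumes "one_cover f X Y R"
  shows "C1 f X Y \<le> card R"
  unfolding C1_def using assms by (intro Least_le) blast

lemma card_le_C1_if_fooling_set:
  assumes cover: "\<exists>R. one_cover f X Y R"
    and diag: "\<And>i. i < m \<Longrightarrow> a i \<in> X \<and> b i \<in> Y \<and> f (a i) (b i)"
    and fooling: "\<And>i j. i < m \<Longrightarrow> j < m \<Longrightarrow> i \<noteq> j \<Longrightarrow> \<not> (f (a i) (b j) \<and> f (a j) (b i))"
  shows "m \<le> C1 f X Y"
proof -
  obtain R where R: "one_cover f X Y R" "card R = C1 f X Y"
    using LeastI_ex[of "\<lambda>k. \<exists>R. one_cover f X Y R \<and> card R = k"] cover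
    unfolding C1_def by blast
  have rect: "\<And>S T. (S, T) \<in> R \<Longrightarrow> \<forall>x\<in>S. \<forall>y\<in>T. f x y"
    and union: "(\<Union>(S, T)\<in>R. S \<times> T) = {(x, y). x \<in> X \<and> y \<in> Y \<and> f x y}"
    using R(1) unfolding one_cover_def by auto
  have "\<exists>r\<in>R. a i \<in> fst r \<and> b i \<in> snd r" if "i < m" for i
  proof -
    have "(a i, b i) \<in> (\<Union>(S, T)\<in>R. S \<times> T)"
      using diag[OF that] union by auto
    then show ?thesis by force
  qed
  then obtain g where g: "\<And>i. i < m \<Longrightarrow> g i \<in> R \<and> a i \<in> fst (g i) \<and> b i \<in> snd (g i)"
    by metis
  have "inj_on g {..<m}"
  proof (rule inj_onI, rule ccontr)
    fix i j assume "i \<in> {..<m}" "j \<in> {..<m}" "g i = g j" "i \<noteq> j"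
    with g[of i] g[of j] rect[of "fst (g i)" "snd (g i)"] fooling[of i j] show False
      by auto
  qed
  moreover have "g ` {..<m} \<subseteq> R" and "finite R"
    using g R(1) by (auto simp: one_cover_def)
  ultimately have "card {..<m} \<le> card R"
    by (intro card_inj_on_le)
  then show ?thesis
    using R(2) by simp
qed

lemma C1_le_if_membership_factorization:
  assumes "finite A"
    and "\<And>x. x \<in> X \<Longrightarrow> g x \<in> A" "\<And>y. y \<in> Y \<Longrightarrow> h y \<subseteq> A"
    and f: "\<And>x y. x \<in> X \<Longrightarrow> y \<in> Y \<Longrightarrow> f x y \<longleftrightarrow> g x \<in> h y"
  shows "C1 f X Y \<le> card A * 2 ^ card A"
proof -
  define P where "P = {(p, S). p \<in> A \<and> S \<subseteq> A \<and> p \<in> S}"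
  define R where "R = (\<lambda>(p, S). ({x\<in>X. g x = p}, {y\<in>Y. h y = S})) ` P"
  have P: "P \<subseteq> A \<times> Pow A" "finite (A \<times> Pow A)"
    using \<open>finite A\<close> unfolding P_def by auto
  have "one_cover f X Y R"
    unfolding one_cover_def
  proof (intro conjI)
    show "finite R"
      unfolding R_def using P by (auto intro: finite_subset)
    show "\<forall>(S, T)\<in>R. S \<subseteq> X \<and> T \<subseteq> Y \<and> (\<forall>x\<in>S. \<forall>y\<in>T. f x y)"
      unfolding R_def P_def using f by auto
    show "(\<Union>(S, T)\<in>R. S \<times> T) = {(x, y). x \<in> X \<and> y \<in> Y \<and> f x y}"
      unfolding R_def P_def using assms by fastforce
  qed
  then have "C1 f X Y \<le> card R"
    by (rule C1_le_card)
  also have "\<dots> \<le> card P"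
    unfolding R_def using P by (intro card_image_le) (auto intro: finite_subset)
  also have "\<dots> \<le> card (A \<times> Pow A)"
    using P by (rule card_mono[rotated])
  also have "\<dots> = card A * 2 ^ card A"
    using \<open>finite A\<close> by (simp add: card_cartesian_product card_Pow)
  finally show ?thesis .
qed

definition word_of :: "'a option list \<Rightarrow> 'a list" where
  "word_of xs = concat (map opt_word xs)"

definition padded :: "nat \<Rightarrow> 'a list \<Rightarrow> nat \<Rightarrow> 'a option list" where
  "padded p w r = replicate p None @ map Some w @ replicate r None"

lemma word_of_simps [simp]:
  "word_of [] = []"
  "word_of (a # xs) = opt_word a @ word_of xs"
  "word_of (xs @ ys) = word_of xs @ word_of ys"
  by (simp_all add: word_of_def)

lemma word_of_map_Some [simp]: "word_of (map Some w) = w"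
  by (induct w) (simp_all add: opt_word_def)

lemma word_of_replicate_None [simp]: "word_of (replicate k None) = []"
  by (induct k) (simp_all add: opt_word_def)

lemma finite_inputs: "finite (inputs n :: 'a::finite option list set)"
  using finite_lists_length_eq[of "UNIV :: 'a option set" n] unfolding inputs_def by simp

lemma interleave_Cons [simp]:
  "interleave (x # xs) (y # ys) = opt_word x @ opt_word y @ interleave xs ys"
  by (simp add: interleave_def)

lemma interleave_append:
  "length xs = length ys \<Longrightarrow> interleave (xs @ xs') (ys @ ys') = interleave xs ys @ interleave xs' ys'"
  by (simp add: interleave_def)

lemma interleave_None_right: "interleave xs (replicate (length xs) None) = word_of xs"
  by (induct xs) (auto simp: opt_word_def interleave_def)

lemma interleave_None_left: "interleave (replicate (length ys) None) ys = word_of ys"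
  by (induct ys) (auto simp: opt_word_def interleave_def)

lemma synt_equiv_interleave:
  assumes "synt_monoid_commutative L" "length xs = length ys"
  shows "synt_equiv L (interleave xs ys) (word_of xs @ word_of ys)"
  using assms(2) unfolding synt_equiv_def
proof (induct xs ys rule: list_induct2)
  case Nil
  then show ?case by (simp add: interleave_def)
next
  case (Cons x xs y ys)
  show ?case
  proof (intro allI)
    fix u v
    have "u @ interleave (x # xs) (y # ys) @ v \<in> L
        \<longleftrightarrow> (u @ opt_word x @ opt_word y) @ interleave xs ys @ v \<in> L"
      by simp
    also have "\<dots> \<longleftrightarrow> (u @ opt_word x) @ (opt_word y @ word_of xs) @ (word_of ys @ v) \<in> L"
      using Cons(2)[rule_format, of "u @ opt_word x @ opt_word y"] by simp
    also have "\<dots> \<longleftrightarrow> (u @ opt_word x) @ (word_of xs @ opt_word y) @ (word_of ys @ v) \<in> L"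
      using assms(1) unfolding synt_monoid_commutative_def synt_equiv_def by blast
    finally show "u @ interleave (x # xs) (y # ys) @ v \<in> L
        \<longleftrightarrow> u @ (word_of (x # xs) @ word_of (y # ys)) @ v \<in> L"
      by simp
  qed
qed

lemma length_padded [simp]: "length (padded p w r) = p + length w + r"
  by (simp add: padded_def)

lemma interleave_padded_before:
  assumes "p + length x \<le> q" "p + length x + r = q + length y + s"
  shows "interleave (padded p x r) (padded q y s) = x @ y"
proof -
  obtain k where q: "q = p + length x + k"
    using le_Suc_ex[OF assms(1)] by blast
  have "padded p x r = (replicate p None @ map Some x) @ replicate r None"
    and "padded q y s = replicate (length (replicate p None @ map Some x)) None @
      replicate k None @ map Some y @ replicate s None"
    by (simp_all add: padded_def q replicate_add)
  moreover have "r = length (replicate k None @ map Some y @ replicate s None)"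
    using assms(2) q by simp
  ultimately show ?thesis
    by (simp only: interleave_append length_replicate interleave_None_left interleave_None_right)
      simp
qed

lemma interleave_padded_after:
  assumes "q + length y \<le> p" "p + length x + r = q + length y + s"
  shows "interleave (padded p x r) (padded q y s) = y @ x"
proof -
  obtain k where p: "p = q + length y + k"
    using le_Suc_ex[OF assms(1)] by blast
  have "padded q y s = (replicate q None @ map Some y) @ replicate s None"
    and "padded p x r = replicate (length (replicate q None @ map Some y)) None @
      replicate k None @ map Some x @ replicate r None"
    by (simp_all add: padded_def p replicate_add)
  moreover have "s = length (replicate k None @ map Some x @ replicate r None)"
    using assms(2) p by simp
  ultimately show ?thesis
    by (simp only: interleave_append length_replicate interleave_None_left interleave_None_right)
      simp
qed

lemma interleave_framed:
  assumes "length xs = length ys"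
  shows "interleave (map Some u @ xs @ map Some v @ replicate k None)
      (replicate (length u) None @ ys @ replicate (length v + k) None) = u @ interleave xs ys @ v"
proof -
  have "interleave (map Some u) (replicate (length u) None) = u"
    using interleave_None_right[of "map Some u"] by simp
  moreover have "interleave (map Some v @ replicate k None) (replicate (length v + k) None) = v"
    using interleave_None_right[of "map Some v @ replicate k None"] by simp
  ultimately show ?thesis
    using assms by (simp add: interleave_append)
qed

lemma foldl_closed: "q \<in> Q \<Longrightarrow> \<forall>q\<in>Q. \<forall>a. \<delta> q a \<in> Q \<Longrightarrow> foldl \<delta> q w \<in> Q"
  by (induct w arbitrary: q) auto

lemma C1_bounded_if_commutative:
  assumes "regular L" "synt_monoid_commutative L"
  obtains B where "\<And>n. C1 (\<lambda>xs ys. interleave xs ys \<in> L) (inputs n) (inputs n) \<le> B"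
proof -
  obtain Q :: "nat set" and \<delta> q0 F where "finite Q" and q0: "q0 \<in> Q"
    and closed: "\<forall>q\<in>Q. \<forall>a. \<delta> q a \<in> Q" and L: "L = {w. foldl \<delta> q0 w \<in> F}"
    using assms(1) unfolding regular_def by blast
  define g where "g xs = foldl \<delta> q0 (word_of xs)" for xs :: "'a option list"
  define h where "h ys = {p\<in>Q. foldl \<delta> p (word_of ys) \<in> F}" for ys :: "'a option list"
  have accept: "interleave xs ys \<in> L \<longleftrightarrow> g xs \<in> h ys"
    if "xs \<in> inputs n" "ys \<in> inputs n" for n xs ys
  proof -
    have "synt_equiv L (interleave xs ys) (word_of xs @ word_of ys)"
      using synt_equiv_interleave[OF assms(2)] that by (simp add: inputs_def)
    then have "[] @ interleave xs ys @ [] \<in> L \<longleftrightarrow> [] @ (word_of xs @ word_of ys) @ [] \<in> L"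
      unfolding synt_equiv_def by blast
    then show ?thesis
      unfolding L g_def h_def using foldl_closed[OF q0 closed] by auto
  qed
  have "C1 (\<lambda>xs ys. interleave xs ys \<in> L) (inputs n) (inputs n) \<le> card Q * 2 ^ card Q" for n
  proof (rule C1_le_if_membership_factorization[OF \<open>finite Q\<close>])
    show "g xs \<in> Q" for xs
      unfolding g_def using foldl_closed[OF q0 closed] .
    show "h ys \<subseteq> Q" for ys
      unfolding h_def by blast
  qed (rule accept)
  then show ?thesis
    using that by blast
qed

lemma N1_lang_bigo_1_if_commutative:
  assumes "regular L" "synt_monoid_commutative L"
  shows "N1_lang L \<in> O(\<lambda>_. 1)"
proof -
  obtain B where B: "\<And>n. C1 (\<lambda>xs ys. interleave xs ys \<in> L) (inputs n) (inputs n) \<le> B"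
    using C1_bounded_if_commutative[OF assms] by blast
  have "norm (N1_lang L n) \<le> norm (log 2 (real (max 1 B)))" for n
    using B[of n] unfolding N1_lang_def N1_def by simp
  then have "N1_lang L \<in> O(\<lambda>_. log 2 (real (max 1 B)))"
    by (intro landau_o.big_mono) simp
  then show ?thesis
    using bigo_const landau_o.big_trans by blast
qed

text \<open>If uxyv \<in> L but uyxv \<notin> L, let Alice hold x in slot i and Bob hold y in slot j of
  a row of d slots of width |x| + |y|: the interleaved word is u x y v when i \<le> j and
  u y x v otherwise.\<close>

lemma C1_ge_if_noncommuting:
  fixes L :: "'a::finite list set"
  assumes in_L: "u @ x @ y @ v \<in> L" and notin_L: "u @ y @ x @ v \<notin> L"
    and n: "length u + length v + d * (length x + length y) \<le> n"
  shows "d \<le> C1 (\<lambda>xs ys. interleave xs ys \<in> L) (inputs n) (inputs n)"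
proof -
  define K where "K = length x + length y"
  define k where "k = n - (length u + length v + d * K)"
  define a where "a i = map Some u @ padded (i * K) x (d * K - i * K - length x)
    @ map Some v @ replicate k None" for i
  define b where "b j = replicate (length u) None @ padded (j * K + length x) y (d * K - j * K - K)
    @ replicate (length v + k) None" for j
  have slot: "i * K + K \<le> d * K" if "i < d" for i
    using mult_le_mono1[of "Suc i" d K] that by simp
  have mid: "interleave (padded (i * K) x (d * K - i * K - length x))
      (padded (j * K + length x) y (d * K - j * K - K)) = (if i \<le> j then x @ y else y @ x)"
    if "i < d" "j < d" for i j
  proof (cases "i \<le> j")
    case True
    then show ?thesis
      using mult_le_mono1[of i j K] slot[OF \<open>i < d\<close>] slot[OF \<open>j < d\<close>]
      unfolding K_def by (subst interleave_padded_before) auto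
  next
    case False
    then show ?thesis
      using mult_le_mono1[of "Suc j" i K] slot[OF \<open>i < d\<close>] slot[OF \<open>j < d\<close>]
      unfolding K_def by (subst interleave_padded_after) auto
  qed
  have fooling: "interleave (a i) (b j) \<in> L \<longleftrightarrow> i \<le> j" if "i < d" "j < d" for i j
  proof -
    have "interleave (a i) (b j) = u @ (if i \<le> j then x @ y else y @ x) @ v"
      unfolding a_def b_def
      using slot[OF \<open>i < d\<close>] slot[OF \<open>j < d\<close>] mid[OF that]
      by (subst interleave_framed) (auto simp: K_def)
    then show ?thesis
      using in_L notin_L by auto
  qed
  have "a i \<in> inputs n \<and> b i \<in> inputs n" if "i < d" for i
    using slot[OF that] n unfolding a_def b_def k_def inputs_def K_def by auto
  with fooling show ?thesis
    by (intro card_le_C1_if_fooling_set[where a = a and b = b] one_cover_exists finite_inputs) auto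
qed

lemma div_le_C1_if_noncommuting:
  fixes L :: "'a::finite list set"
  assumes "u @ x @ y @ v \<in> L" "u @ y @ x @ v \<notin> L"
  shows "(n - (length u + length v)) div (length x + length y)
    \<le> C1 (\<lambda>xs ys. interleave xs ys \<in> L) (inputs n) (inputs n)"
proof (cases "length u + length v \<le> n")
  case True
  let ?c = "length u + length v" and ?K = "length x + length y"
  have "?c + (n - ?c) div ?K * ?K \<le> n"
    using div_times_less_eq_dividend[of "n - ?c" ?K] True by linarith
  then show ?thesis
    by (rule C1_ge_if_noncommuting[OF assms])
qed simp

lemma le_double_div_mult:
  fixes n c K :: nat
  assumes "K > 0" "2 * (c + K) \<le> n"
  shows "n \<le> 2 * ((n - c) div K * K)"
proof -
  obtain m where m: "n = c + m"
    using assms(2) le_Suc_ex[of c n] by auto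
  have "c + m \<le> 2 * q" if "q + r = m" "r < K" for q r
    using that assms(2) m by presburger
  then have "c + m \<le> 2 * (m div K * K)"
    using \<open>K > 0\<close> div_mult_mod_eq[of m K] mod_less_divisor[of K m] by blast
  then show ?thesis
    unfolding m by simp
qed

lemma N1_lang_bigomega_ln_if_noncommutative:
  fixes L :: "'a::finite list set"
  assumes "\<not> synt_monoid_commutative L"
  shows "N1_lang L \<in> \<Omega>(\<lambda>n. ln (real n))"
proof -
  obtain u x y v where in_L: "u @ x @ y @ v \<in> L" and notin_L: "u @ y @ x @ v \<notin> L"
    using assms unfolding synt_monoid_commutative_def synt_equiv_def by auto
  define c where "c = length u + length v"
  define K where "K = length x + length y"
  have "K > 0"
    using in_L notin_L unfolding K_def by auto
  have lower: "log 2 (real n / (2 * K)) \<le> N1_lang L n" if n: "2 * (c + K) \<le> n" for n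
  proof -
    let ?d = "(n - c) div K" and ?C = "C1 (\<lambda>xs ys. interleave xs ys \<in> L) (inputs n) (inputs n)"
    have "real n \<le> 2 * K * real ?d"
      using le_double_div_mult[OF \<open>K > 0\<close> n]
      by (metis of_nat_le_iff of_nat_mult of_nat_numeral mult.commute mult.assoc)
    then have "real n / (2 * K) \<le> real ?d"
      using \<open>K > 0\<close> by (simp add: pos_divide_le_eq mult.commute)
    also have "\<dots> \<le> real (max 1 ?C)"
      using div_le_C1_if_noncommuting[OF in_L notin_L, of n] unfolding c_def K_def by simp
    finally have "real n / (2 * K) \<le> real (max 1 ?C)" .
    moreover have "real n / (2 * K) > 0"
      using n \<open>K > 0\<close> by simp
    ultimately show ?thesis
      unfolding N1_lang_def N1_def by simp
  qed
  have "(\<lambda>n. log 2 (real n / (2 * K))) \<in> O(N1_lang L)"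
  proof (intro landau_o.big_mono eventually_at_top_linorderI)
    fix n assume n: "n \<ge> 2 * (c + K)"
    have "1 \<le> real n / (2 * K)"
      using n \<open>K > 0\<close> by (simp add: field_simps)
    then show "norm (log 2 (real n / (2 * K))) \<le> norm (N1_lang L n)"
      using lower[OF n] by simp
  qed
  moreover have "(\<lambda>n. ln (real n)) \<in> O(\<lambda>n. log 2 (real n / (2 * K)))"
    using \<open>K > 0\<close> by real_asymp
  ultimately show ?thesis
    unfolding bigomega_iff_bigo using landau_o.big_trans by blast
qed

theorem mainTheorem7:
  fixes L :: "'a::finite list set"
  assumes "regular L"
  shows "(N1_lang L \<in> O(\<lambda>_. 1) \<longleftrightarrow> synt_monoid_commutative L) \<and>
         (\<not> synt_monoid_commutative L \<longrightarrow> N1_lang L \<in> \<Omega>(\<lambda>n. ln (real n)))"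
proof -
  have ln_not_bounded: "(\<lambda>n. ln (real n)) \<notin> O(\<lambda>_. 1 :: real)"
  proof
    assume "(\<lambda>n. ln (real n)) \<in> O(\<lambda>_. 1 :: real)"
    moreover have "(\<lambda>_. 1 :: real) \<in> o(\<lambda>n. ln (real n))"
      by real_asymp
    ultimately have "eventually (\<lambda>n::nat. (1::real) = 0) at_top"
      by (intro landau_o.small_big_asymmetric)
    then show False
      by simp
  qed
  have "\<not> synt_monoid_commutative L \<Longrightarrow> N1_lang L \<notin> O(\<lambda>_. 1)"
    using N1_lang_bigomega_ln_if_noncommutative ln_not_bounded
    unfolding bigomega_iff_bigo by (metis landau_o.big_trans)
  then show ?thesis
    using N1_lang_bigo_1_if_commutative[OF assms] N1_lang_bigomega_ln_if_noncommutative by blast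
qed

end
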